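(* Let $\mathcal U$ be a two-dimensional update family with stable set $\mathcal S$. There exists a finite set $\mathcal Q\subset S^1$ such that for every pair $u,v$ of consecutive elements of $\mathcal S\cup\mathcal Q$ there exists an update rule $X\in\mathcal U$ with $$X\subset\big(\mathbb H_u\cup\ell_u\big)\cap\big(\mathbb H_v\cup\ell_v\big).$$
   Context: An update family is a finite collection $\mathcal U$ of finite subsets of $\mathbb Z^2\setminus\{0\}$ (update rules), acting by $A_{t+1}=A_t\cup\{x:x+X\subset A_t\text{ for some }X\in\mathcal U\}$, closure $[A]=\bigcup_tA_t$. For $u\in S^1$, $\mathbb H_u=\{x\in\mathbb Z^2:\langle x,u\rangle<0\}$ and $\ell_u=\{x\in\mathbb Z^2:\langle x,u\rangle=0\}$; $u$ is stable if $[\mathbb H_u]=\mathbb H_u$. For $\mathcal T\subset S^1$, elements $u,v\in\mathcal T$ are consecutive if $u\ne v$ and $\mathcal T\cap[u,v]=\{u,v\}$, where $[u,v]$ is the closed arc of $S^1$ from $u$ to $v$ (in a fixed orientation). *)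

theory Defs
  imports Complex_Main
begin

text \<open>Lattice points of Z^2 are pairs of integers; directions u in S^1 are complex
numbers of modulus 1 (u = Re u + i Im u).\<close>

type_synonym point = "int \<times> int"

definition padd :: "point \<Rightarrow> point \<Rightarrow> point" where
  "padd x y = (fst x + fst y, snd x + snd y)"

definition update_family :: "point set set \<Rightarrow> bool" where
  "update_family U \<longleftrightarrow> finite U \<and> (\<forall>X\<in>U. finite X \<and> X \<subseteq> UNIV - {(0,0)})"

definition bp_step :: "point set set \<Rightarrow> point set \<Rightarrow> point set" where
  "bp_step U A = A \<union> {x. \<exists>X\<in>U. padd x ` X \<subseteq> A}"

definition bp_closure :: "point set set \<Rightarrow> point set \<Rightarrow> point set" where
  "bp_closure U A = (\<Union>t::nat. (bp_step U ^^ t) A)"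

definition S1 :: "complex set" where
  "S1 = {u. cmod u = 1}"

definition ip :: "point \<Rightarrow> complex \<Rightarrow> real" where
  "ip x u = real_of_int (fst x) * Re u + real_of_int (snd x) * Im u"

definition halfplane :: "complex \<Rightarrow> point set" where
  "halfplane u = {x. ip x u < 0}"

definition line :: "complex \<Rightarrow> point set" where
  "line u = {x. ip x u = 0}"

definition stable :: "point set set \<Rightarrow> complex \<Rightarrow> bool" where
  "stable U u \<longleftrightarrow> bp_closure U (halfplane u) = halfplane u"

definition stable_set :: "point set set \<Rightarrow> complex set" where
  "stable_set U = {u \<in> S1. stable U u}"

definition arc :: "complex \<Rightarrow> complex \<Rightarrow> complex set" where
  "arc u v = {w \<in> S1. \<exists>s t. 0 \<le> s \<and> s \<le> t \<and> t < 2 * pi \<and> w = u * cis s \<and> v = u * cis t}"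

definition consecutive :: "complex set \<Rightarrow> complex \<Rightarrow> complex \<Rightarrow> bool" where
  "consecutive T u v \<longleftrightarrow> u \<in> T \<and> v \<in> T \<and> u \<noteq> v \<and> T \<inter> arc u v = {u, v}"

end

theory Submission imports Defs begin

(* Let Q be the set of directions w whose line l_w contains a site of
   some update rule; Q is finite because every rule is a finite set of nonzero
   points and each nonzero point lies on l_w for only two unit vectors w.
   Put T = S \<union> Q.  If u, v are consecutive in T, write v = u cis t with
   0 < t < 2 pi, so that no direction u cis s with 0 < s < t lies in T.  The
   middle direction m = u cis (t/2) is unstable, hence some rule X lies in H_m.
   For each y in X the function s \<mapsto> <y, u cis s> is continuous, negative at
   t/2, and has no zero in (0,t) (such a zero would put u cis s into Q); hence it
   is non-positive at both ends, i.e. y \<in> H_u \<union> l_u and y \<in> H_v \<union> l_v. *)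

lemma cis_eq_imp_eq:
  assumes "0 \<le> s" "s < 2*pi" "0 \<le> t" "t < 2*pi" and "cis s = cis t"
  shows "s = t"
proof (rule ccontr)
  assume "s \<noteq> t"
  have "cos (s - t) = 1"
    using arg_cong[OF \<open>cis s = cis t\<close>, of "\<lambda>z. Re (z / cis t)"] by (simp add: cis_divide)
  then obtain n :: int where n: "s - t = n * 2 * pi" by (auto simp: cos_one_2pi_int)
  have "\<bar>s - t\<bar> = \<bar>real_of_int n\<bar> * (2*pi)" using n by (simp add: abs_mult)
  moreover have "0 < \<bar>s - t\<bar>" "\<bar>s - t\<bar> < 2*pi" using assms \<open>s \<noteq> t\<close> by auto
  ultimately have "0 < real_of_int \<bar>n\<bar>" "real_of_int \<bar>n\<bar> < 1"
    by (auto simp: zero_less_mult_iff)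
  then have "0 < \<bar>n\<bar>" "\<bar>n\<bar> < 1" by linarith+
  then show False by linarith
qed

lemma cis_rotate_S1: "u \<in> S1 \<Longrightarrow> u * cis s \<in> S1"
  by (simp add: S1_def norm_mult)

lemma consecutive_open_arc:
  assumes T: "T \<subseteq> S1" and uv: "consecutive T u v"
  obtains t where "0 < t" "t < 2*pi" "v = u * cis t"
    and "\<And>s. 0 < s \<Longrightarrow> s < t \<Longrightarrow> u * cis s \<notin> T"
proof -
  have "u \<in> T" and "u \<noteq> v" and TA: "T \<inter> arc u v = {u, v}"
    using uv by (auto simp: consecutive_def)
  then have uS: "u \<in> S1" and "u \<noteq> 0" using T by (auto simp: S1_def)
  have "v \<in> arc u v" using TA by blast
  then obtain t where t: "0 \<le> t" "t < 2*pi" "v = u * cis t" unfolding arc_def by auto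
  have "t \<noteq> 0" using \<open>u \<noteq> v\<close> t by auto
  have "u * cis s \<notin> T" if s: "0 < s" "s < t" for s
  proof
    assume "u * cis s \<in> T"
    moreover have "u * cis s \<in> arc u v" unfolding arc_def
      using s t cis_rotate_S1[OF uS] by (intro CollectI conjI exI[of _ s] exI[of _ t]) auto
    ultimately have "u * cis s = u \<or> u * cis s = v" using TA by blast
    then have "cis s = cis 0 \<or> cis s = cis t" using \<open>u \<noteq> 0\<close> t(3) by auto
    then show False using cis_eq_imp_eq[of s 0] cis_eq_imp_eq[of s t] s t by auto
  qed
  with t \<open>t \<noteq> 0\<close> show thesis by (intro that[of t]) auto
qed

lemma ip_padd: "ip (padd x y) w = ip x w + ip y w"
  by (simp add: ip_def padd_def algebra_simps)

text \<open>If no update rule lies inside \<open>H_w\<close>, one step of the process cannot leave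
  \<open>H_w\<close>; so an unstable direction always has a rule contained in \<open>H_w\<close>.\<close>
lemma unstable_has_rule:
  assumes "\<not> stable U w"
  shows "\<exists>X\<in>U. X \<subseteq> halfplane w"
proof (rule ccontr)
  assume no_rule: "\<not> (\<exists>X\<in>U. X \<subseteq> halfplane w)"
  have "x \<in> halfplane w" if "X \<in> U" "padd x ` X \<subseteq> halfplane w" for x X
  proof -
    obtain y where "y \<in> X" "0 \<le> ip y w"
      using no_rule \<open>X \<in> U\<close> unfolding halfplane_def by force
    moreover have "ip (padd x y) w < 0"
      using that(2) \<open>y \<in> X\<close> by (auto simp: halfplane_def)
    ultimately show ?thesis by (simp add: ip_padd halfplane_def)
  qed
  then have step: "bp_step U (halfplane w) = halfplane w"
    unfolding bp_step_def by blast
  have "(bp_step U ^^ n) (halfplane w) = halfplane w" for n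
    by (induction n) (simp_all add: step)
  then have "stable U w" by (simp add: stable_def bp_closure_def)
  then show False using assms by contradiction
qed

text \<open>A nonzero lattice point lies on \<open>l_w\<close> for only finitely many (in fact two)
  directions: writing \<open>z = a + b i\<close> for \<open>y = (a,b)\<close>, the condition says that
  \<open>w * cnj z\<close> is purely imaginary of modulus \<open>|z|\<close>.\<close>
lemma line_directions_finite:
  assumes "y \<noteq> (0,0)"
  shows "finite {w \<in> S1. ip y w = 0}"
proof -
  define z where "z = Complex (of_int (fst y)) (of_int (snd y))"
  have "z \<noteq> 0" using assms by (auto simp: z_def complex_eq_iff prod_eq_iff)
  have "{w \<in> S1. ip y w = 0} \<subseteq> (\<lambda>c. c / cnj z) ` {\<i> * cmod z, - \<i> * cmod z}"
  proof
    fix w assume "w \<in> {w \<in> S1. ip y w = 0}"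
    then have w: "cmod w = 1" "ip y w = 0" by (simp_all add: S1_def)
    define p where "p = w * cnj z"
    have "Re p = 0" using w(2) by (simp add: p_def z_def ip_def mult.commute)
    then have p: "p = \<i> * of_real (Im p)" by (simp add: complex_eq_iff)
    have "\<bar>Im p\<bar> = cmod z"
      using w(1) cmod_eq_Im[OF \<open>Re p = 0\<close>] by (simp add: p_def norm_mult)
    then have "Im p = cmod z \<or> Im p = - cmod z" by linarith
    then have "p \<in> {\<i> * cmod z, - \<i> * cmod z}" using p by auto
    moreover have "w = p / cnj z" using \<open>z \<noteq> 0\<close> by (simp add: p_def)
    ultimately show "w \<in> (\<lambda>c. c / cnj z) ` {\<i> * cmod z, - \<i> * cmod z}" by blast
  qed
  then show ?thesis by (rule finite_subset) simp
qed

lemma nonpos_at_ends_if_no_zero: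
  fixes f :: "real \<Rightarrow> real"
  assumes cont: "continuous_on {a..b} f" and c: "a < c" "c < b" "f c < 0"
    and no_zero: "\<And>s. a < s \<Longrightarrow> s < b \<Longrightarrow> f s \<noteq> 0"
  shows "f a \<le> 0" "f b \<le> 0"
proof -
  show "f a \<le> 0"
  proof (rule ccontr)
    assume "\<not> f a \<le> 0"
    then obtain s where "a \<le> s" "s \<le> c" "f s = 0"
      using IVT2'[of f c 0 a] c continuous_on_subset[OF cont] by fastforce
    then show False using no_zero[of s] c \<open>\<not> f a \<le> 0\<close> by (cases "s = a") auto
  qed
  show "f b \<le> 0"
  proof (rule ccontr)
    assume "\<not> f b \<le> 0"
    then obtain s where "c \<le> s" "s \<le> b" "f s = 0"
      using IVT'[of f c 0 b] c continuous_on_subset[OF cont] by fastforce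
    then show False using no_zero[of s] c \<open>\<not> f b \<le> 0\<close> by (cases "s = b") auto
  qed
qed

lemma rule_between_consecutive:
  assumes T: "T \<subseteq> S1" "stable_set U \<subseteq> T"
    and lines: "\<And>X y w. X \<in> U \<Longrightarrow> y \<in> X \<Longrightarrow> w \<in> S1 \<Longrightarrow> ip y w = 0 \<Longrightarrow> w \<in> T"
    and uv: "consecutive T u v"
  shows "\<exists>X\<in>U. X \<subseteq> (halfplane u \<union> line u) \<inter> (halfplane v \<union> line v)"
proof -
  have uS: "u \<in> S1" using uv T by (auto simp: consecutive_def)
  obtain t where t: "0 < t" "t < 2*pi" "v = u * cis t"
    and gap: "\<And>s. 0 < s \<Longrightarrow> s < t \<Longrightarrow> u * cis s \<notin> T"
    using consecutive_open_arc[OF T(1) uv] by blast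
  have "\<not> stable U (u * cis (t/2))"
    using gap[of "t/2"] t T(2) cis_rotate_S1[OF uS] by (auto simp: stable_set_def)
  then obtain X where X: "X \<in> U" "X \<subseteq> halfplane (u * cis (t/2))"
    using unstable_has_rule by blast
  have "ip y (u * cis 0) \<le> 0 \<and> ip y (u * cis t) \<le> 0" if "y \<in> X" for y
  proof -
    have "continuous_on {0..t} (\<lambda>s. ip y (u * cis s))"
      unfolding ip_def by (intro continuous_intros)
    moreover have "ip y (u * cis (t/2)) < 0" using X(2) \<open>y \<in> X\<close> by (auto simp: halfplane_def)
    moreover have "ip y (u * cis s) \<noteq> 0" if "0 < s" "s < t" for s
      using lines[OF X(1) \<open>y \<in> X\<close> cis_rotate_S1[OF uS]] gap that by blast
    ultimately show ?thesis
      using nonpos_at_ends_if_no_zero[of 0 t "\<lambda>s. ip y (u * cis s)" "t/2"] t by auto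
  qed
  then have "X \<subseteq> (halfplane u \<union> line u) \<inter> (halfplane v \<union> line v)"
    using t by (fastforce simp: halfplane_def line_def)
  then show ?thesis using X(1) by blast
qed

theorem mainTheorem7:
  fixes U :: "point set set"
  assumes "update_family U"
  shows "\<exists>Q. finite Q \<and> Q \<subseteq> S1 \<and>
           (\<forall>u v. consecutive (stable_set U \<union> Q) u v \<longrightarrow>
              (\<exists>X\<in>U. X \<subseteq> (halfplane u \<union> line u) \<inter> (halfplane v \<union> line v)))"
proof -
  define Q where "Q = (\<Union>X\<in>U. \<Union>y\<in>X. {w \<in> S1. ip y w = 0})"
  have U: "finite U" and rules: "\<And>X. X \<in> U \<Longrightarrow> finite X"
    and nonzero: "\<And>X y. X \<in> U \<Longrightarrow> y \<in> X \<Longrightarrow> y \<noteq> (0,0)"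
    using assms by (auto simp: update_family_def)
  have "finite Q"
    unfolding Q_def by (intro finite_UN_I U rules line_directions_finite nonzero)
  have "Q \<subseteq> S1" unfolding Q_def by blast
  have T: "stable_set U \<union> Q \<subseteq> S1"
    using \<open>Q \<subseteq> S1\<close> by (auto simp: stable_set_def)
  have lines: "w \<in> stable_set U \<union> Q"
    if "X \<in> U" "y \<in> X" "w \<in> S1" "ip y w = 0" for X y w
    using that unfolding Q_def by blast
  show ?thesis using \<open>finite Q\<close> \<open>Q \<subseteq> S1\<close>
    by (intro exI[of _ Q] conjI allI impI rule_between_consecutive[OF T Un_upper1 lines])
qed

end
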